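(* Let $\Gamma$ be a hyperbolic graph and $D\ge 2$ an integer. Then the $2D$-polarized lattice $\mathcal{F}_h(\Gamma)$ is hyperbolic if and only if an intrinsic polarization $h_\Gamma$ of $\Gamma$ exists and $2D\le h_\Gamma^2$.
   Context: Graphs are finite, without loops or multiple edges. For a graph $\Gamma$, $\mathbb{Z}\Gamma$ is the lattice freely generated by the vertices, with $v^2=-2$ and $u\cdot v=1$ or $0$ according as distinct vertices $u,v$ are adjacent or not. For a lattice $L$, $\ker L=\{x\in L: x\cdot y=0\ \forall y\in L\}$, and $L/\ker$ denotes $L/\ker L$ with the induced form. The lattice $\mathcal{F}_h(\Gamma):=(\mathbb{Z}\Gamma\oplus\mathbb{Z}h)/\ker$, where the form on $\mathbb{Z}\Gamma\oplus\mathbb{Z}h$ (a direct sum of groups, not an orthogonal sum) extends that of $\mathbb{Z}\Gamma$ by $h^2=2D$ and $v\cdot h=1$ for every vertex $v$. A lattice is hyperbolic if the positive inertia index of its real quadratic form is $1$; $\Gamma$ is hyperbolic if $\mathbb{Z}\Gamma$ is. An intrinsic polarization is a vector $h_\Gamma\in\mathbb{Z}\Gamma\otimes\mathbb{Q}$ with $v\cdot h_\Gamma=1$ for every vertex $v$; if it exists, it is unique modulo $\ker\mathbb{Z}\Gamma$, so $h_\Gamma^2\in\mathbb{Q}$ is well defined. *)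

theory Defs
  imports "HOL-Analysis.Analysis"
begin

definition simple_graph :: "('v \<Rightarrow> 'v \<Rightarrow> bool) \<Rightarrow> bool" where
  "simple_graph E \<longleftrightarrow> (\<forall>u v. E u v \<longleftrightarrow> E v u) \<and> (\<forall>v. \<not> E v v)"

text \<open>Gram matrix of the lattice ZGamma in the basis of vertices.\<close>
definition graph_gram :: "('v \<Rightarrow> 'v \<Rightarrow> bool) \<Rightarrow> 'v \<Rightarrow> 'v \<Rightarrow> int" where
  "graph_gram E u v = (if u = v then -2 else if E u v then 1 else 0)"

text \<open>Gram matrix of ZGamma + Zh (basis: Some v for vertex v, None for h),
  with h^2 = 2D and v.h = 1.\<close>
definition pol_gram :: "('v \<Rightarrow> 'v \<Rightarrow> bool) \<Rightarrow> int \<Rightarrow> 'v option \<Rightarrow> 'v option \<Rightarrow> int" where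
  "pol_gram E D x y = (case (x, y) of
      (None, None) \<Rightarrow> 2 * D
    | (None, Some _) \<Rightarrow> 1
    | (Some _, None) \<Rightarrow> 1
    | (Some u, Some v) \<Rightarrow> graph_gram E u v)"

definition qform :: "('i::finite \<Rightarrow> 'i \<Rightarrow> int) \<Rightarrow> real^'i \<Rightarrow> real" where
  "qform G x = (\<Sum>i\<in>UNIV. \<Sum>j\<in>UNIV. x$i * of_int (G i j) * x$j)"

definition pos_inertia :: "('i::finite \<Rightarrow> 'i \<Rightarrow> int) \<Rightarrow> nat" where
  "pos_inertia G = Max {dim W | W. subspace W \<and> (\<forall>x\<in>W. x \<noteq> 0 \<longrightarrow> qform G x > 0)}"

definition hyperbolic_form :: "('i::finite \<Rightarrow> 'i \<Rightarrow> int) \<Rightarrow> bool" where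
  "hyperbolic_form G \<longleftrightarrow> pos_inertia G = 1"

definition hyperbolic_graph :: "('v::finite \<Rightarrow> 'v \<Rightarrow> bool) \<Rightarrow> bool" where
  "hyperbolic_graph E \<longleftrightarrow> hyperbolic_form (graph_gram E)"

text \<open>F_h(Gamma) = (ZGamma + Zh)/ker. The positive inertia index of L/ker L
  equals that of L (the kernel is contained in the radical of the real form),
  so hyperbolicity of F_h(Gamma) is that of the form pol_gram E D.\<close>
definition Fh_hyperbolic :: "('v::finite \<Rightarrow> 'v \<Rightarrow> bool) \<Rightarrow> int \<Rightarrow> bool" where
  "Fh_hyperbolic E D \<longleftrightarrow> hyperbolic_form (pol_gram E D)"

definition intrinsic_pol :: "('v::finite \<Rightarrow> 'v \<Rightarrow> bool) \<Rightarrow> ('v \<Rightarrow> rat) \<Rightarrow> bool" where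
  "intrinsic_pol E h \<longleftrightarrow> (\<forall>v. (\<Sum>u\<in>UNIV. h u * of_int (graph_gram E u v)) = 1)"

definition pol_square :: "('v::finite \<Rightarrow> 'v \<Rightarrow> bool) \<Rightarrow> ('v \<Rightarrow> rat) \<Rightarrow> rat" where
  "pol_square E h = (\<Sum>u\<in>UNIV. \<Sum>w\<in>UNIV. h u * h w * of_int (graph_gram E u w))"

end

(* Write the vectors of the real span of Gamma and h as a + c h, so that
   (a + c h)^2 = a^2 + 2 c s(a) + 2 D c^2, where s(a) is the coordinate sum of a.
   If an intrinsic polarization g exists, then s(a) = a.g, and completing the square
   gives (a + c h)^2 = (a + c g)^2 + c^2 (2 D - g^2). For 2 D <= g^2 the linear map
   a + c h |-> a + c g does not decrease the form, so the positive inertia index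
   stays 1; for 2 D > g^2 a vector p with p^2 > 0 and h - g span a positive definite
   plane. If no intrinsic polarization exists, the Fredholm alternative over the
   rationals yields a vector k in the kernel of the form with s(k) <> 0, and p
   together with h + t k spans a positive definite plane for suitable t. Finally
   g^2 = s(g) = g.g' = g'^2 for any two intrinsic polarizations g, g'. *)

theory Submission
  imports Defs
begin

definition bform :: "('i::finite \<Rightarrow> 'i \<Rightarrow> int) \<Rightarrow> real^'i \<Rightarrow> real^'i \<Rightarrow> real" where
  "bform G x y = (\<Sum>i\<in>UNIV. \<Sum>j\<in>UNIV. x$i * of_int (G i j) * y$j)"

lemma qform_eq_bform: "qform G x = bform G x x"
  by (simp add: qform_def bform_def)

lemma bform_add_left: "bform G (x + y) z = bform G x z + bform G y z"
  by (simp add: bform_def algebra_simps sum.distrib)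

lemma bform_add_right: "bform G z (x + y) = bform G z x + bform G z y"
  by (simp add: bform_def algebra_simps sum.distrib)

lemma bform_scaleR_left: "bform G (c *\<^sub>R x) y = c * bform G x y"
  by (simp add: bform_def sum_distrib_left algebra_simps)

lemma bform_scaleR_right: "bform G x (c *\<^sub>R y) = c * bform G x y"
  by (simp add: bform_def sum_distrib_left algebra_simps)

lemma bform_commute:
  assumes "\<And>i j. G i j = G j i"
  shows "bform G x y = bform G y x"
  unfolding bform_def by (subst sum.swap) (simp add: assms algebra_simps)

lemma qform_0 [simp]: "qform G 0 = 0"
  by (simp add: qform_def)

lemma qform_scaleR: "qform G (c *\<^sub>R x) = c\<^sup>2 * qform G x"
  by (simp add: qform_eq_bform bform_scaleR_left bform_scaleR_right power2_eq_square)

lemma qform_add: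
  assumes "\<And>i j. G i j = G j i"
  shows "qform G (x + y) = qform G x + 2 * bform G x y + qform G y"
  using bform_commute[of G x y, OF assms]
  by (simp add: qform_eq_bform bform_add_left bform_add_right)

definition pos_definite_on :: "('i::finite \<Rightarrow> 'i \<Rightarrow> int) \<Rightarrow> (real^'i) set \<Rightarrow> bool" where
  "pos_definite_on G W \<longleftrightarrow> subspace W \<and> (\<forall>x\<in>W. x \<noteq> 0 \<longrightarrow> qform G x > 0)"

lemma finite_pos_definite_dims:
  fixes G :: "'i::finite \<Rightarrow> 'i \<Rightarrow> int"
  shows "finite {dim W | W. subspace W \<and> (\<forall>x\<in>W. x \<noteq> 0 \<longrightarrow> qform G x > 0)}"
proof (rule finite_subset)
  show "{dim W | W. subspace W \<and> (\<forall>x\<in>W. x \<noteq> 0 \<longrightarrow> qform G x > 0)} \<subseteq> {..CARD('i)}"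
    using dim_subset_UNIV_cart by auto
qed simp

lemma pos_inertia_ge_dim: "pos_definite_on G W \<Longrightarrow> dim W \<le> pos_inertia G"
  unfolding pos_inertia_def pos_definite_on_def
  by (rule Max_ge[OF finite_pos_definite_dims]) blast

lemma pos_inertia_attained:
  obtains W where "pos_definite_on G W" "dim W = pos_inertia G"
proof -
  have "{0} \<in> {W. subspace W \<and> (\<forall>x\<in>W. x \<noteq> 0 \<longrightarrow> qform G x > 0)}"
    by (simp add: subspace_0)
  then have "{dim W | W. subspace W \<and> (\<forall>x\<in>W. x \<noteq> 0 \<longrightarrow> qform G x > 0)} \<noteq> {}"
    by blast
  from Max_in[OF finite_pos_definite_dims this] show ?thesis
    using that unfolding pos_inertia_def pos_definite_on_def by auto
qed

lemma qform_pos_if_pos_inertia_pos: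
  assumes "0 < pos_inertia G"
  obtains p where "0 < qform G p"
proof -
  obtain W where W: "pos_definite_on G W" "dim W = pos_inertia G"
    by (rule pos_inertia_attained)
  have "\<not> W \<subseteq> {0}"
    using W assms dim_subset[of W "{0}"] by auto
  then obtain p where "p \<in> W" "p \<noteq> 0" by auto
  then show ?thesis
    using W that unfolding pos_definite_on_def by auto
qed

lemma pos_inertia_mono:
  fixes G :: "'i::finite \<Rightarrow> 'i \<Rightarrow> int" and H :: "'j::finite \<Rightarrow> 'j \<Rightarrow> int"
    and f :: "real^'i \<Rightarrow> real^'j"
  assumes f: "linear f" and le: "\<And>x. qform G x \<le> qform H (f x)"
  shows "pos_inertia G \<le> pos_inertia H"
proof -
  obtain W where W: "pos_definite_on G W" "dim W = pos_inertia G"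
    by (rule pos_inertia_attained)
  then have sW: "subspace W" and pW: "\<And>x. x \<in> W \<Longrightarrow> x \<noteq> 0 \<Longrightarrow> qform G x > 0"
    unfolding pos_definite_on_def by auto
  have fx: "f x \<noteq> 0" if "x \<in> W" "x \<noteq> 0" for x
    using pW[OF that] le[of x] by auto
  have inj: "inj_on f (span W)"
    unfolding span_eq_iff[THEN iffD2, OF sW] linear_inj_on_iff_eq_0[OF f sW]
    using fx by blast
  have "pos_definite_on H (f ` W)"
    unfolding pos_definite_on_def
  proof (intro conjI ballI impI)
    show "subspace (f ` W)" by (rule linear_subspace_image[OF f sW])
  next
    fix y assume "y \<in> f ` W" "y \<noteq> 0"
    then obtain x where "x \<in> W" "y = f x" "x \<noteq> 0"
      using linear_0[OF f] by auto
    then show "qform H y > 0" using pW le[of x] by fastforce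
  qed
  then have "dim (f ` W) \<le> pos_inertia H" by (rule pos_inertia_ge_dim)
  then show ?thesis using W dim_image_eq[OF f inj] by simp
qed

lemma two_le_pos_inertia:
  assumes sym: "\<And>i j. G i j = G j i"
    and x: "0 < qform G x" and xy: "(bform G x y)\<^sup>2 < qform G x * qform G y"
  shows "2 \<le> pos_inertia G"
proof -
  have pos: "0 < qform G (s *\<^sub>R x + r *\<^sub>R y)" if "s \<noteq> 0 \<or> r \<noteq> 0" for s r
  proof -
    let ?B = "bform G x y"
    have "qform G x * qform G (s *\<^sub>R x + r *\<^sub>R y)
        = (s * qform G x + r * ?B)\<^sup>2 + r\<^sup>2 * (qform G x * qform G y - ?B\<^sup>2)"
      using bform_commute[of G y x, OF sym]
      by (simp add: qform_add sym qform_scaleR bform_scaleR_left bform_scaleR_right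
          power2_eq_square algebra_simps)
    also have "\<dots> > 0"
    proof (cases "r = 0")
      case True
      then show ?thesis using that x by simp
    next
      case False
      then have "0 < r\<^sup>2 * (qform G x * qform G y - ?B\<^sup>2)" using xy by simp
      then show ?thesis by (simp add: add_nonneg_pos)
    qed
    finally show ?thesis using x by (simp add: zero_less_mult_iff)
  qed
  have "pos_definite_on G (span {x, y})"
    unfolding pos_definite_on_def
  proof (intro conjI ballI impI)
    fix z assume "z \<in> span {x, y}" "z \<noteq> 0"
    then obtain s where "z - s *\<^sub>R x \<in> span {y}"
      by (auto simp: span_insert)
    then obtain r where "z - s *\<^sub>R x = r *\<^sub>R y"
      by (auto simp: span_singleton)
    then have z: "z = s *\<^sub>R x + r *\<^sub>R y"
      by (simp add: algebra_simps)
    with \<open>z \<noteq> 0\<close> have "s \<noteq> 0 \<or> r \<noteq> 0" by auto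
    from pos[OF this] show "qform G z > 0" unfolding z .
  qed (rule subspace_span)
  moreover have "dim (span {x, y}) = 2"
  proof -
    have "x \<notin> span {y}"
    proof
      assume "x \<in> span {y}"
      then obtain k where "x = k *\<^sub>R y" by (auto simp: span_singleton)
      then show False using pos[of 1 "-k"] by simp
    qed
    moreover have "y \<noteq> 0" using pos[of 0 1] by auto
    ultimately show ?thesis by (simp add: dim_insert)
  qed
  ultimately show ?thesis by (metis pos_inertia_ge_dim)
qed

text \<open>Elimination step of the Fredholm alternative: subtracting a suitable multiple
  of k0 makes k orthogonal to the row i0 as well.\<close>
lemma orthogonal_to_kernel_eliminate_row:
  fixes A :: "'i \<Rightarrow> 'j \<Rightarrow> 'a::field"
  assumes orth: "\<And>k. \<forall>i\<in>insert i0 I. (\<Sum>j\<in>J. A i j * k j) = 0 \<Longrightarrow> (\<Sum>j\<in>J. b j * k j) = 0"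
    and k0: "\<forall>i\<in>I. (\<Sum>j\<in>J. A i j * k0 j) = 0" "(\<Sum>j\<in>J. A i0 j * k0 j) \<noteq> 0"
    and k: "\<forall>i\<in>I. (\<Sum>j\<in>J. A i j * k j) = 0"
  shows "(\<Sum>j\<in>J. (b j - (\<Sum>j\<in>J. b j * k0 j) / (\<Sum>j\<in>J. A i0 j * k0 j) * A i0 j) * k j) = 0"
proof -
  define row where "row f l = (\<Sum>j\<in>J. f j * l j)" for f l :: "'j \<Rightarrow> 'a"
  have row_diff: "row f (\<lambda>j. k j - r * k0 j) = row f k - r * row f k0" for f r
    by (simp add: row_def algebra_simps sum_subtractf sum_distrib_left)
  define r where "r = row (A i0) k / row (A i0) k0"
  define c where "c = row b k0 / row (A i0) k0"
  have "row (A i0) k0 \<noteq> 0"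
    using k0(2) by (simp add: row_def)
  then have "row (A i0) k - r * row (A i0) k0 = 0"
    by (simp add: r_def)
  moreover have "row (A i) k = 0" "row (A i) k0 = 0" if "i \<in> I" for i
    using k k0(1) that by (simp_all add: row_def)
  ultimately have "\<forall>i\<in>insert i0 I. row (A i) (\<lambda>j. k j - r * k0 j) = 0"
    by (simp add: row_diff)
  then have "row b (\<lambda>j. k j - r * k0 j) = 0"
    using orth by (simp add: row_def)
  moreover have "row b (\<lambda>j. k j - r * k0 j) = row b k - c * row (A i0) k"
    unfolding row_diff by (simp add: r_def c_def)
  moreover have "(\<Sum>j\<in>J. (b j - c * A i0 j) * k j) = row b k - c * row (A i0) k"
    by (simp add: row_def left_diff_distrib sum_subtractf sum_distrib_left mult.assoc)
  ultimately show ?thesis by (simp add: c_def row_def)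
qed

lemma solvable_if_orthogonal_to_kernel:
  fixes A :: "'i \<Rightarrow> 'j \<Rightarrow> 'a::field"
  assumes "finite I" "finite J"
    and "\<And>k. \<forall>i\<in>I. (\<Sum>j\<in>J. A i j * k j) = 0 \<Longrightarrow> (\<Sum>j\<in>J. b j * k j) = 0"
  shows "\<exists>g. \<forall>j\<in>J. (\<Sum>i\<in>I. g i * A i j) = b j"
  using assms(1,3)
proof (induction I arbitrary: b rule: finite_induct)
  case empty
  have "b j = 0" if "j \<in> J" for j
    using empty.prems[of "\<lambda>j'. if j' = j then 1 else 0"] that assms(2)
    by (simp add: if_distrib cong: if_cong)
  then show ?case by simp
next
  case (insert i0 I)
  obtain c where "\<exists>g. \<forall>j\<in>J. (\<Sum>i\<in>I. g i * A i j) = b j - c * A i0 j"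
  proof (cases "\<exists>k0. (\<forall>i\<in>I. (\<Sum>j\<in>J. A i j * k0 j) = 0) \<and> (\<Sum>j\<in>J. A i0 j * k0 j) \<noteq> 0")
    case False
    then have "\<exists>g. \<forall>j\<in>J. (\<Sum>i\<in>I. g i * A i j) = b j"
      using insert.prems by (intro insert.IH) auto
    then show thesis using that[of 0] by simp
  next
    case True
    then obtain k0 where k0: "\<forall>i\<in>I. (\<Sum>j\<in>J. A i j * k0 j) = 0"
      "(\<Sum>j\<in>J. A i0 j * k0 j) \<noteq> 0"
      by blast
    define c where "c = (\<Sum>j\<in>J. b j * k0 j) / (\<Sum>j\<in>J. A i0 j * k0 j)"
    have "\<exists>g. \<forall>j\<in>J. (\<Sum>i\<in>I. g i * A i j) = b j - c * A i0 j"
    proof (rule insert.IH)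
      fix k assume "\<forall>i\<in>I. (\<Sum>j\<in>J. A i j * k j) = 0"
      from orthogonal_to_kernel_eliminate_row[OF insert.prems k0 this]
      show "(\<Sum>j\<in>J. (b j - c * A i0 j) * k j) = 0" unfolding c_def .
    qed
    then show thesis by (rule that)

  qed
  then obtain g where g: "\<forall>j\<in>J. (\<Sum>i\<in>I. g i * A i j) = b j - c * A i0 j" by blast
  have "(\<Sum>i\<in>insert i0 I. (g(i0 := c)) i * A i j) = c * A i0 j + (\<Sum>i\<in>I. g i * A i j)" for j
    using insert.hyps by (auto intro: sum.cong)
  with g have "\<forall>j\<in>J. (\<Sum>i\<in>insert i0 I. (g(i0 := c)) i * A i j) = b j"
    by simp
  then show ?case by blast
qed

lemma graph_gram_commute: "simple_graph E \<Longrightarrow> graph_gram E u v = graph_gram E v u"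
  by (simp add: simple_graph_def graph_gram_def)

lemma pol_gram_commute: "simple_graph E \<Longrightarrow> pol_gram E D x y = pol_gram E D y x"
  by (simp add: pol_gram_def graph_gram_commute split: option.split)

definition coord_sum :: "real^'i \<Rightarrow> real" where
  "coord_sum a = (\<Sum>i\<in>UNIV. a$i)"

lemma coord_sum_scaleR [simp]: "coord_sum (c *\<^sub>R a) = c * coord_sum a"
  by (simp add: coord_sum_def sum_distrib_left)

definition pol_vec :: "real^'v \<Rightarrow> real \<Rightarrow> real^('v option)" where
  "pol_vec a c = (\<chi> z. case z of None \<Rightarrow> c | Some v \<Rightarrow> a$v)"

lemma pol_vec_components: "pol_vec (\<chi> v. x$Some v) (x$None) = x"
  by (simp add: pol_vec_def vec_eq_iff split: option.split)

lemma sum_UNIV_option: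
  "(\<Sum>z\<in>(UNIV::'v::finite option set). f z) = f None + (\<Sum>v\<in>UNIV. f (Some v))"
  by (simp add: UNIV_option_conv sum.reindex)

lemma bform_pol_gram_pol_vec:
  "bform (pol_gram E D) (pol_vec a c) (pol_vec a' c') =
     bform (graph_gram E) a a' + c * coord_sum a' + c' * coord_sum a + 2 * of_int D * c * c'"
  by (simp add: bform_def sum_UNIV_option pol_vec_def pol_gram_def coord_sum_def sum.distrib
      sum_distrib_left sum_distrib_right algebra_simps)

lemma qform_pol_gram_pol_vec:
  "qform (pol_gram E D) (pol_vec a c) =
     qform (graph_gram E) a + 2 * c * coord_sum a + 2 * of_int D * c\<^sup>2"
  by (simp add: qform_eq_bform bform_pol_gram_pol_vec power2_eq_square)

lemma pos_inertia_graph_le_pol: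
  "pos_inertia (graph_gram E) \<le> pos_inertia (pol_gram E D)"
proof (rule pos_inertia_mono)
  show "linear (\<lambda>a. pol_vec a 0)"
    by (simp add: linear_iff pol_vec_def vec_eq_iff split: option.split)
qed (simp add: qform_pol_gram_pol_vec)

lemma qform_pol_gram_complete_square:
  assumes sym: "simple_graph E" and g: "\<And>a. bform (graph_gram E) g a = coord_sum a"
  shows "qform (pol_gram E D) (pol_vec a c) =
    qform (graph_gram E) (a + c *\<^sub>R g) + c\<^sup>2 * (2 * of_int D - qform (graph_gram E) g)"
  using bform_commute[of "graph_gram E" a g] graph_gram_commute[OF sym] g[of a]
  by (simp add: qform_pol_gram_pol_vec qform_add graph_gram_commute[OF sym] qform_scaleR
      bform_scaleR_right algebra_simps)

lemma pos_inertia_pol_le_graph: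
  fixes E :: "'v::finite \<Rightarrow> 'v \<Rightarrow> bool"
  assumes sym: "simple_graph E" and g: "\<And>a. bform (graph_gram E) g a = coord_sum a"
    and le: "2 * of_int D \<le> qform (graph_gram E) g"
  shows "pos_inertia (pol_gram E D) \<le> pos_inertia (graph_gram E)"
proof (rule pos_inertia_mono)
  show "linear (\<lambda>x. (\<chi> v. x$Some v) + x$None *\<^sub>R g)"
    by (auto simp: linear_iff vec_eq_iff algebra_simps)
  fix x :: "real^('v option)"
  have "qform (pol_gram E D) x = qform (pol_gram E D) (pol_vec (\<chi> v. x$Some v) (x$None))"
    by (simp add: pol_vec_components)
  also have "\<dots> \<le> qform (graph_gram E) ((\<chi> v. x$Some v) + x$None *\<^sub>R g)"
    using le by (simp add: qform_pol_gram_complete_square[OF sym g] mult_nonneg_nonpos)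
  finally show "qform (pol_gram E D) x \<le> qform (graph_gram E) ((\<chi> v. x$Some v) + x$None *\<^sub>R g)" .
qed

lemma two_le_pos_inertia_pol_if_square_less:
  assumes sym: "simple_graph E" and g: "\<And>a. bform (graph_gram E) g a = coord_sum a"
    and less: "qform (graph_gram E) g < 2 * of_int D" and p: "0 < qform (graph_gram E) p"
  shows "2 \<le> pos_inertia (pol_gram E D)"
proof (rule two_le_pos_inertia[where x = "pol_vec p 0" and y = "pol_vec (- g) 1"])
  have "bform (graph_gram E) p g = coord_sum p"
    using g bform_commute[of "graph_gram E"] graph_gram_commute[OF sym] by metis
  then show "(bform (pol_gram E D) (pol_vec p 0) (pol_vec (- g) 1))\<^sup>2
      < qform (pol_gram E D) (pol_vec p 0) * qform (pol_gram E D) (pol_vec (- g) 1)"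
    using p less
    by (simp add: bform_pol_gram_pol_vec qform_pol_gram_complete_square[OF sym g]
        bform_scaleR_right[of _ _ "-1", simplified])
qed (use p pol_gram_commute[OF sym] in \<open>simp_all add: qform_pol_gram_pol_vec\<close>)

lemma two_le_pos_inertia_pol_if_radical:
  assumes sym: "simple_graph E" and k: "\<And>a. bform (graph_gram E) a k = 0"
    and k_sum: "coord_sum k \<noteq> 0" and p: "0 < qform (graph_gram E) p"
  shows "2 \<le> pos_inertia (pol_gram E D)"
proof -
  \<comment> \<open>Moving h along the radical vector k does not change its products with the
    graph part but shifts its square by 2 t (coord_sum k), which can be made large.\<close>
  define M where "M = (coord_sum p)\<^sup>2 / qform (graph_gram E) p + 1"
  define t where "t = (M - 2 * of_int D) / (2 * coord_sum k)"
  have "qform (graph_gram E) k = 0"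
    using k[of k] by (simp add: qform_eq_bform)
  then have "qform (pol_gram E D) (pol_vec (t *\<^sub>R k) 1) = M"
    using k_sum by (simp add: qform_pol_gram_pol_vec qform_scaleR t_def field_simps)
  moreover have "bform (pol_gram E D) (pol_vec p 0) (pol_vec (t *\<^sub>R k) 1) = coord_sum p"
    using k[of p] by (simp add: bform_pol_gram_pol_vec bform_scaleR_right)
  moreover have "(coord_sum p)\<^sup>2 < qform (graph_gram E) p * M"
    using p by (simp add: M_def field_simps)
  ultimately show ?thesis
    using p pol_gram_commute[OF sym]
    by (intro two_le_pos_inertia[where x = "pol_vec p 0" and y = "pol_vec (t *\<^sub>R k) 1"])
      (simp_all add: qform_pol_gram_pol_vec)
qed

lemma qform_intrinsic_unique:
  assumes sym: "simple_graph E"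
    and g: "\<And>a. bform (graph_gram E) g a = coord_sum a"
    and h: "\<And>a. bform (graph_gram E) h a = coord_sum a"
  shows "qform (graph_gram E) g = qform (graph_gram E) h"
  using g[of g] g[of h] h[of g] h[of h] bform_commute[of "graph_gram E" g h]
  by (simp add: qform_eq_bform graph_gram_commute[OF sym])

lemma hyperbolic_graph_qform_pos:
  assumes "hyperbolic_graph E"
  obtains p where "0 < qform (graph_gram E) p"
proof (rule qform_pos_if_pos_inertia_pos)
  show "0 < pos_inertia (graph_gram E)"
    using assms by (simp add: hyperbolic_graph_def hyperbolic_form_def)
qed

lemma Fh_hyperbolic_iff_square:
  assumes sym: "simple_graph E" and hyp: "hyperbolic_graph E"
    and g: "\<And>a. bform (graph_gram E) g a = coord_sum a"
  shows "Fh_hyperbolic E D \<longleftrightarrow> 2 * of_int D \<le> qform (graph_gram E) g"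
proof -
  have G: "pos_inertia (graph_gram E) = 1"
    using hyp by (simp add: hyperbolic_graph_def hyperbolic_form_def)
  obtain p where p: "0 < qform (graph_gram E) p"
    using hyp by (rule hyperbolic_graph_qform_pos)
  show ?thesis
  proof (cases "2 * of_int D \<le> qform (graph_gram E) g")
    case True
    with G pos_inertia_graph_le_pol[of E D] pos_inertia_pol_le_graph[OF sym g True]
    show ?thesis by (simp add: Fh_hyperbolic_def hyperbolic_form_def)
  next
    case False
    with two_le_pos_inertia_pol_if_square_less[OF sym g _ p, of D]
    show ?thesis by (simp add: Fh_hyperbolic_def hyperbolic_form_def)
  qed
qed

lemma not_Fh_hyperbolic_if_radical:
  assumes sym: "simple_graph E" and hyp: "hyperbolic_graph E"
    and k: "\<And>a. bform (graph_gram E) a k = 0" and k_sum: "coord_sum k \<noteq> 0"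
  shows "\<not> Fh_hyperbolic E D"
proof -
  obtain p where "0 < qform (graph_gram E) p"
    using hyp by (rule hyperbolic_graph_qform_pos)
  from two_le_pos_inertia_pol_if_radical[OF sym k k_sum this, where D = D] show ?thesis
    by (simp add: Fh_hyperbolic_def hyperbolic_form_def)
qed

definition rat_vec :: "('v::finite \<Rightarrow> rat) \<Rightarrow> real^'v" where
  "rat_vec h = (\<chi> v. of_rat (h v))"

lemma coord_sum_rat_vec: "coord_sum (rat_vec k) = of_rat (\<Sum>v\<in>UNIV. k v)"
  by (simp add: coord_sum_def rat_vec_def of_rat_sum)

lemma qform_rat_vec: "qform (graph_gram E) (rat_vec h) = of_rat (pol_square E h)"
  by (simp add: qform_def pol_square_def rat_vec_def of_rat_sum of_rat_mult algebra_simps)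

lemma bform_rat_vec_intrinsic:
  assumes "intrinsic_pol E h"
  shows "bform (graph_gram E) (rat_vec h) a = coord_sum a"
proof -
  have "bform (graph_gram E) (rat_vec h) a =
      (\<Sum>v\<in>UNIV. of_rat (\<Sum>u\<in>UNIV. h u * of_int (graph_gram E u v)) * a$v)"
    unfolding bform_def rat_vec_def
    by (subst sum.swap) (simp add: of_rat_sum of_rat_mult sum_distrib_right)
  then show ?thesis
    using assms by (simp add: intrinsic_pol_def coord_sum_def)
qed

lemma bform_rat_vec_radical:
  assumes "\<And>u. (\<Sum>v\<in>UNIV. of_int (graph_gram E u v) * k v) = 0"
  shows "bform (graph_gram E) a (rat_vec k) = 0"
proof -
  have "bform (graph_gram E) a (rat_vec k) =
      (\<Sum>u\<in>UNIV. a$u * of_rat (\<Sum>v\<in>UNIV. of_int (graph_gram E u v) * k v))"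
    unfolding bform_def rat_vec_def
    by (simp add: of_rat_sum of_rat_mult sum_distrib_left mult.assoc)
  then show ?thesis using assms by simp
qed

lemma pol_square_intrinsic_unique:
  assumes "simple_graph E" "intrinsic_pol E g" "intrinsic_pol E h"
  shows "pol_square E g = pol_square E h"
  using qform_intrinsic_unique[OF assms(1) bform_rat_vec_intrinsic bform_rat_vec_intrinsic,
      OF assms(2,3)]
  by (simp add: qform_rat_vec of_rat_mult)

theorem proposition2p8:
  fixes E :: "'v::finite \<Rightarrow> 'v \<Rightarrow> bool" and D :: int
  assumes "simple_graph E" and "hyperbolic_graph E" and "D \<ge> 2"
  shows "Fh_hyperbolic E D \<longleftrightarrow>
           (\<exists>h. intrinsic_pol E h \<and> of_int (2 * D) \<le> pol_square E h)"
proof (cases "\<exists>k. (\<forall>u. (\<Sum>v\<in>UNIV. of_int (graph_gram E u v) * k v) = (0::rat)) \<and> (\<Sum>v\<in>UNIV. k v) \<noteq> 0")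
  case True
  then obtain k where k: "\<And>u. (\<Sum>v\<in>UNIV. of_int (graph_gram E u v) * k v) = (0::rat)"
    and k_sum: "coord_sum (rat_vec k) \<noteq> 0"
    by (auto simp: coord_sum_rat_vec)
  have "\<not> intrinsic_pol E h" for h
    using bform_rat_vec_intrinsic[of E h "rat_vec k"] bform_rat_vec_radical[OF k] k_sum by auto
  moreover have "\<not> Fh_hyperbolic E D"
    using not_Fh_hyperbolic_if_radical[OF assms(1,2) bform_rat_vec_radical[OF k] k_sum] .
  ultimately show ?thesis by blast
next
  case False
  then obtain g where g: "intrinsic_pol E g"
    using solvable_if_orthogonal_to_kernel[of UNIV UNIV "\<lambda>u v. of_int (graph_gram E u v)" "\<lambda>_. 1"]
    by (auto simp: intrinsic_pol_def)
  have "Fh_hyperbolic E D \<longleftrightarrow> 2 * of_int D \<le> qform (graph_gram E) (rat_vec g)"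
    by (rule Fh_hyperbolic_iff_square[OF assms(1,2) bform_rat_vec_intrinsic[OF g]])
  also have "\<dots> \<longleftrightarrow> of_int (2 * D) \<le> pol_square E g"
    using of_rat_less_eq[of "of_int (2 * D)" "pol_square E g"] by (simp add: qform_rat_vec of_rat_mult)
  also have "\<dots> \<longleftrightarrow> (\<exists>h. intrinsic_pol E h \<and> of_int (2 * D) \<le> pol_square E h)"
    using g pol_square_intrinsic_unique[OF assms(1) g] by metis
  finally show ?thesis .
qed

end
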